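(* Let $\bar{\ell}_2(Z_1,Z_2):=\sup_{(s,a)\in\mathcal S\times\mathcal A}\ell_2\big(Z_1(s,a),Z_2(s,a)\big)$ for value distributions $Z_1,Z_2$. Then $\bar{\ell}_2$ is a metric on value distributions (for which it is finite), and the distributional Bellman operator $\mathcal{T}^{\pi}$ is a $\sqrt{\gamma}$-contraction in $\bar{\ell}_2$, i.e. for all value distributions $Z_1,Z_2$, $$\bar{\ell}_2(\mathcal{T}^{\pi}Z_1,\mathcal{T}^{\pi}Z_2)\le\sqrt{\gamma}\,\bar{\ell}_2(Z_1,Z_2).$$
   Context: Consider a Markov decision process with finite state space $\mathcal S$, finite action space $\mathcal A$, transition probabilities $P(s'|s,a)$, random rewards $R(s,a)$ and discount factor $\gamma\in(0,1)$, together with a fixed stochastic policy $\pi$. A value distribution $Z$ assigns to each $(s,a)$ a real random variable (random return) $Z(s,a)$. The transition operator is $P^{\pi}Z(s,a)\overset{D}{=}Z(s',a')$ with $s'\sim P(\cdot|s,a)$, $a'\sim\pi(\cdot|s')$, and the distributional Bellman operator is $\mathcal{T}^{\pi}Z(s,a)\overset{D}{=}R(s,a)+\gamma P^{\pi}Z(s,a)$, where $R(s,a)$ is independent of $P^\pi Z(s,a)$ and $\overset{D}{=}$ means equality in distribution. For real random variables $X,Y$ with cumulative distribution functions $F_X,F_Y$, the square root of the Cramér distance is $\ell_2(X,Y)=\big(\int_{-\infty}^{\infty}(F_X(x)-F_Y(x))^2\,dx\big)^{1/2}$ (depending only on the laws of $X,Y$). *)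

theory Defs
  imports "HOL-Probability.Probability"
begin

definition real_law :: "real measure \<Rightarrow> bool" where
  "real_law M \<longleftrightarrow> prob_space M \<and> sets M = sets borel"

definition value_dist :: "('s \<Rightarrow> 'a \<Rightarrow> real measure) \<Rightarrow> bool" where
  "value_dist Z \<longleftrightarrow> (\<forall>s a. real_law (Z s a))"

text \<open>Square root of the Cramer distance (possibly infinite, hence valued in ennreal).\<close>
definition cramer_sq :: "real measure \<Rightarrow> real measure \<Rightarrow> ennreal" where
  "cramer_sq M N = (\<integral>\<^sup>+ x. ennreal ((cdf M x - cdf N x)\<^sup>2) \<partial>lborel)"

definition ell2 :: "real measure \<Rightarrow> real measure \<Rightarrow> ennreal" where
  "ell2 M N = (if cramer_sq M N = \<infinity> then \<infinity> else ennreal (sqrt (enn2real (cramer_sq M N))))"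

definition ell2_bar :: "('s \<Rightarrow> 'a \<Rightarrow> real measure) \<Rightarrow> ('s \<Rightarrow> 'a \<Rightarrow> real measure) \<Rightarrow> ennreal" where
  "ell2_bar Z1 Z2 = (SUP sa. ell2 (Z1 (fst sa) (snd sa)) (Z2 (fst sa) (snd sa)))"

definition trans_op :: "('s \<Rightarrow> 'a \<Rightarrow> 's pmf) \<Rightarrow> ('s \<Rightarrow> 'a pmf)
     \<Rightarrow> ('s \<Rightarrow> 'a \<Rightarrow> real measure) \<Rightarrow> 's \<Rightarrow> 'a \<Rightarrow> real measure" where
  "trans_op P \<pi> Z s a =
     measure_pmf (P s a) \<bind> (\<lambda>s'. measure_pmf (\<pi> s') \<bind> (\<lambda>a'. Z s' a'))"

text \<open>Distributional Bellman operator: law of R(s,a) + gamma * (P^pi Z)(s,a), with the two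
  summands independent (convolution of their laws).\<close>
definition bellman :: "('s \<Rightarrow> 'a \<Rightarrow> 's pmf) \<Rightarrow> ('s \<Rightarrow> 'a pmf) \<Rightarrow> ('s \<Rightarrow> 'a \<Rightarrow> real measure)
     \<Rightarrow> real \<Rightarrow> ('s \<Rightarrow> 'a \<Rightarrow> real measure) \<Rightarrow> 's \<Rightarrow> 'a \<Rightarrow> real measure" where
  "bellman P \<pi> R \<gamma> Z s a =
     convolution (R s a) (distr (trans_op P \<pi> Z s a) borel (\<lambda>x. \<gamma> * x))"

end

theory Submission
  imports Defs
begin

text \<open>
  The Cram\'er distance is the \<open>L\<^sup>2(lborel)\<close> distance of distribution functions, so
  \<open>ell2\<close> is a metric by Minkowski's inequality and because a distribution function is
  right-continuous. For the contraction, the cdf of a mixture is the mixture of the cdfs, so by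
  Jensen the squared cdf difference of two mixtures is at most the average of the squared
  component differences; scaling by \<open>\<gamma>\<close> changes variables and multiplies the Cram\'er
  distance by \<open>\<gamma>\<close>; and adding an independent reward \<open>R\<close> averages translates of the cdf
  difference, which by Jensen, Fubini and translation invariance does not increase it.
\<close>

lemma real_law_real_distribution: "real_law M \<Longrightarrow> real_distribution M"
  unfolding real_law_def real_distribution_def real_distribution_axioms_def by auto

lemma borel_measurable_cdf_real_law: "real_law M \<Longrightarrow> cdf M \<in> borel_measurable borel"
  by (rule borel_measurable_mono, unfold mono_def)
    (use real_law_real_distribution real_distribution.finite_borel_measure_M
      finite_borel_measure.cdf_nondecreasing in blast)

lemma real_law_cdf_bounds: "real_law M \<Longrightarrow> 0 \<le> cdf M x \<and> cdf M x \<le> 1"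
  using real_law_real_distribution[of M] real_distribution.cdf_bounded_prob
    real_distribution.finite_borel_measure_M finite_borel_measure.cdf_nonneg
  by blast

lemma emeasure_atMost_real_law: "real_law M \<Longrightarrow> emeasure M {..y} = ennreal (cdf M y)"
proof -
  assume "real_law M"
  then interpret prob_space M by (simp add: real_law_def)
  show ?thesis unfolding cdf_def by (simp add: emeasure_eq_measure)
qed

lemma cdf_eq_of_emeasure_atMost:
  assumes "real_law M" "emeasure M {..y} = ennreal c" "0 \<le> c"
  shows "cdf M y = c"
  using assms emeasure_atMost_real_law[of M y] real_law_cdf_bounds[of M y] by simp

lemma real_law_cdf_diff_bounded:
  "real_law M \<Longrightarrow> real_law N \<Longrightarrow> \<bar>cdf M x - cdf N x\<bar> \<le> 1"
  using real_law_cdf_bounds[of M x] real_law_cdf_bounds[of N x] by (simp add: abs_le_iff)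

subsection \<open>The Cram\'er distance as a metric\<close>

lemma ell2_power2: "ell2 M N ^ 2 = cramer_sq M N"
  unfolding ell2_def by (cases "cramer_sq M N") (auto simp: ennreal_power)

lemma ennreal_power2_le_imp_le: "(x::ennreal)\<^sup>2 \<le> y\<^sup>2 \<Longrightarrow> x \<le> y"
proof (cases x; cases y)
  fix a b assume "x\<^sup>2 \<le> y\<^sup>2" "x = ennreal a" "0 \<le> a" "y = ennreal b" "0 \<le> b"
  then show "x \<le> y" by (auto simp: ennreal_power intro: power2_le_imp_le)
qed (auto simp: ennreal_power top_unique)

lemma ell2_le_iff: "ell2 M N \<le> D \<longleftrightarrow> cramer_sq M N \<le> D\<^sup>2"
  using ell2_power2[of M N] ennreal_power2_le_imp_le[of "ell2 M N" D]
    power_mono_ennreal[of "ell2 M N" D 2]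
  by auto

lemma ell2_self: "ell2 M M = 0"
  unfolding ell2_def cramer_sq_def by simp

lemma ell2_commute: "ell2 M N = ell2 N M"
  unfolding ell2_def cramer_sq_def by (simp add: power2_commute)

lemma AE_eq_0_of_nn_integral_square_eq_0:
  fixes f :: "real \<Rightarrow> real"
  assumes "f \<in> borel_measurable borel" "(\<integral>\<^sup>+ z. ennreal ((f z)\<^sup>2) \<partial>lborel) = 0"
  shows "AE z in lborel. f z = 0"
proof -
  have "AE z in lborel. ennreal ((f z)\<^sup>2) = 0"
    using assms by (subst nn_integral_0_iff_AE[symmetric]) auto
  then show ?thesis by (rule AE_mp) (auto intro!: AE_I2)
qed

lemma right_continuous_AE_eq_0_imp_eq_0:
  fixes f :: "real \<Rightarrow> real"
  assumes cont: "\<And>x. continuous (at_right x) f" and AE: "AE z in lborel. f z = 0"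
  shows "f x = 0"
proof (rule ccontr)
  assume "f x \<noteq> 0"
  moreover have "(f \<longlongrightarrow> f x) (at_right x)"
    using cont by (simp add: continuous_within)
  ultimately have "eventually (\<lambda>y. f y \<noteq> 0) (at_right x)"
    by (intro tendsto_imp_eventually_ne) auto
  then obtain b where b: "x < b" "\<And>y. x < y \<Longrightarrow> y < b \<Longrightarrow> f y \<noteq> 0"
    using eventually_at_right[of x "x + 1"] by auto
  from AE obtain S where S: "{y \<in> space lborel. f y \<noteq> 0} \<subseteq> S" "emeasure lborel S = 0"
    "S \<in> sets lborel"
    by (rule AE_E)
  have "{x<..<b} \<subseteq> S" using S(1) b(2) by auto
  then have "emeasure lborel {x<..<b} \<le> emeasure lborel S"
    using S(3) by (intro emeasure_mono) auto
  then show False using S(2) b(1) by simp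
qed

lemma cramer_sq_eq_0_imp_eq:
  assumes M: "real_law M" and N: "real_law N" and zero: "cramer_sq M N = 0"
  shows "M = N"
proof -
  have [measurable]: "cdf M \<in> borel_measurable borel" "cdf N \<in> borel_measurable borel"
    using M N by (auto intro: borel_measurable_cdf_real_law)
  have "continuous (at_right x) (\<lambda>z. cdf M z - cdf N z)" for x
    using M N by (intro continuous_diff) (auto intro: finite_borel_measure.cdf_is_right_cont
        real_distribution.finite_borel_measure_M real_law_real_distribution)
  moreover have "AE z in lborel. cdf M z - cdf N z = 0"
    using zero by (intro AE_eq_0_of_nn_integral_square_eq_0) (simp_all add: cramer_sq_def)
  ultimately have "cdf M x - cdf N x = 0" for x
    by (rule right_continuous_AE_eq_0_imp_eq_0)
  then have "cdf M = cdf N" by auto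
  then show ?thesis using cdf_unique M N real_law_real_distribution by blast
qed

lemma power2_add_le_weighted:
  fixes f g :: real
  assumes "0 < t"
  shows "(f + g)\<^sup>2 \<le> (1 + t) * f\<^sup>2 + (1 + 1 / t) * g\<^sup>2"
proof -
  have "0 \<le> (t * f - g)\<^sup>2 / t" using assms by simp
  also have "(t * f - g)\<^sup>2 / t = t * f\<^sup>2 - 2 * f * g + g\<^sup>2 / t"
    using assms by (simp add: power2_eq_square field_simps)
  finally show ?thesis using assms by (simp add: power2_eq_square field_simps)
qed

lemma nn_integral_square_add_eq_of_null:
  fixes f g :: "real \<Rightarrow> real"
  assumes [measurable]: "f \<in> borel_measurable borel"
    and null: "(\<integral>\<^sup>+ z. ennreal ((f z)\<^sup>2) \<partial>lborel) = 0"
  shows "(\<integral>\<^sup>+ z. ennreal ((f z + g z)\<^sup>2) \<partial>lborel) = (\<integral>\<^sup>+ z. ennreal ((g z)\<^sup>2) \<partial>lborel)"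
  using AE_eq_0_of_nn_integral_square_eq_0[OF assms] by (intro nn_integral_cong_AE) auto

text \<open>Minkowski's inequality in \<open>L\<^sup>2(lborel)\<close>, via the pointwise bound with \<open>t = b / a\<close>.\<close>
lemma nn_integral_square_add_le:
  fixes f g :: "real \<Rightarrow> real"
  assumes [measurable]: "f \<in> borel_measurable borel" "g \<in> borel_measurable borel"
    and x: "x\<^sup>2 = (\<integral>\<^sup>+ z. ennreal ((f z)\<^sup>2) \<partial>lborel)"
    and y: "y\<^sup>2 = (\<integral>\<^sup>+ z. ennreal ((g z)\<^sup>2) \<partial>lborel)"
  shows "(\<integral>\<^sup>+ z. ennreal ((f z + g z)\<^sup>2) \<partial>lborel) \<le> (x + y)\<^sup>2"
proof (cases "x = \<top> \<or> y = \<top>")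
  case True then show ?thesis by auto
next
  case False
  then obtain a b where ab: "x = ennreal a" "y = ennreal b" "0 \<le> a" "0 \<le> b"
    by (metis ennreal_cases)
  consider "a = 0" | "b = 0" | "0 < a" "0 < b" using ab by linarith
  then show ?thesis
  proof cases
    case 1
    then show ?thesis
      using nn_integral_square_add_eq_of_null[of f g] x y ab by simp
  next
    case 2
    then show ?thesis
      using nn_integral_square_add_eq_of_null[of g f] x y ab by (simp add: add.commute)
  next
    case 3
    define t where "t = b / a"
    have t: "0 < t" using 3 by (simp add: t_def)
    have "(\<integral>\<^sup>+ z. ennreal ((f z + g z)\<^sup>2) \<partial>lborel)
        \<le> (\<integral>\<^sup>+ z. ennreal (1 + t) * ennreal ((f z)\<^sup>2) + ennreal (1 + 1 / t) * ennreal ((g z)\<^sup>2) \<partial>lborel)"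
      using t by (intro nn_integral_mono) (simp add: ennreal_mult[symmetric]
          ennreal_plus[symmetric] power2_add_le_weighted del: ennreal_plus)
    also have "\<dots> = ennreal (1 + t) * x\<^sup>2 + ennreal (1 + 1 / t) * y\<^sup>2"
      by (simp add: x y nn_integral_add nn_integral_cmult)
    also have "\<dots> = ennreal ((1 + t) * a\<^sup>2 + (1 + 1 / t) * b\<^sup>2)"
      using t ab by (simp add: ennreal_power ennreal_mult[symmetric] ennreal_plus[symmetric]
          del: ennreal_plus)
    also have "(1 + t) * a\<^sup>2 + (1 + 1 / t) * b\<^sup>2 = (a + b)\<^sup>2"
      using 3 unfolding t_def by (simp add: power2_eq_square field_simps)
    also have "ennreal ((a + b)\<^sup>2) = (x + y)\<^sup>2"
      using ab by (simp add: ennreal_power ennreal_plus[symmetric] del: ennreal_plus)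
    finally show ?thesis .
  qed
qed

lemma ell2_triangle:
  assumes "real_law M1" "real_law M2" "real_law M3"
  shows "ell2 M1 M3 \<le> ell2 M1 M2 + ell2 M2 M3"
proof -
  have [measurable]: "cdf M1 \<in> borel_measurable borel" "cdf M2 \<in> borel_measurable borel"
    "cdf M3 \<in> borel_measurable borel" using assms by (auto intro: borel_measurable_cdf_real_law)
  have "cramer_sq M1 M3 \<le> (ell2 M1 M2 + ell2 M2 M3)\<^sup>2"
    using nn_integral_square_add_le[of "\<lambda>z. cdf M1 z - cdf M2 z" "\<lambda>z. cdf M2 z - cdf M3 z"
        "ell2 M1 M2" "ell2 M2 M3"]
    by (simp add: ell2_power2 cramer_sq_def)
  then show ?thesis by (simp add: ell2_le_iff)
qed

subsection \<open>Distribution functions of mixtures, scalings and convolutions\<close>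

lemma real_law_bind_pmf:
  assumes "\<And>x. real_law (K x)"
  shows "real_law (measure_pmf p \<bind> K)"
proof -
  have "K \<in> measurable (measure_pmf p) (subprob_algebra borel)"
    using assms by (auto simp: space_subprob_algebra real_law_def prob_space_imp_subprob_space)
  then have "prob_space (measure_pmf p \<bind> K)"
    using assms by (intro measure_pmf.prob_space_bind) (auto simp: real_law_def)
  moreover have "sets (measure_pmf p \<bind> K) = sets borel"
    using assms by (intro sets_bind) (auto simp: real_law_def)
  ultimately show ?thesis by (simp add: real_law_def)
qed

lemma cdf_bind_pmf:
  fixes p :: "'x::finite pmf"
  assumes K: "\<And>x. real_law (K x)"
  shows "cdf (measure_pmf p \<bind> K) y = (\<Sum>x\<in>UNIV. pmf p x * cdf (K x) y)"
proof (rule cdf_eq_of_emeasure_atMost)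
  have "K \<in> measurable (measure_pmf p) (subprob_algebra borel)"
    using K by (auto simp: space_subprob_algebra real_law_def prob_space_imp_subprob_space)
  then have "emeasure (measure_pmf p \<bind> K) {..y} = (\<integral>\<^sup>+x. emeasure (K x) {..y} \<partial>measure_pmf p)"
    by (intro emeasure_bind) auto
  also have "\<dots> = (\<Sum>x\<in>UNIV. emeasure (K x) {..y} * pmf p x)"
    by (intro nn_integral_measure_pmf_support) auto
  also have "\<dots> = ennreal (\<Sum>x\<in>UNIV. pmf p x * cdf (K x) y)"
    using real_law_cdf_bounds[OF K]
    by (simp add: emeasure_atMost_real_law[OF K] ennreal_mult[symmetric] mult.commute
        del: sum_ennreal) (subst sum_ennreal, auto)
  finally show "emeasure (measure_pmf p \<bind> K) {..y} = ennreal (\<Sum>x\<in>UNIV. pmf p x * cdf (K x) y)" .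
  show "0 \<le> (\<Sum>x\<in>UNIV. pmf p x * cdf (K x) y)"
    using real_law_cdf_bounds[OF K] by (auto intro!: sum_nonneg)
qed (rule real_law_bind_pmf[OF K])

lemma real_law_distr:
  assumes M: "real_law M" and f: "f \<in> borel_measurable borel"
  shows "real_law (distr M borel f)"
proof -
  have "sets M = sets borel" using M by (simp add: real_law_def)
  then have "f \<in> borel_measurable M" using f by (simp add: measurable_def space_borel)
  then have "prob_space (distr M borel f)"
    using M by (intro prob_space.prob_space_distr) (simp_all add: real_law_def)
  then show ?thesis by (simp add: real_law_def)
qed

lemma cdf_distr_scale:
  assumes M: "real_law M" and c: "0 < c"
  shows "cdf (distr M borel (\<lambda>x. c * x)) y = cdf M (y / c)"
proof -
  have sM[measurable_cong]: "sets M = sets borel" using M by (simp add: real_law_def)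
  have m: "(\<lambda>x. c * x) \<in> measurable M borel" by measurable
  have "space M = UNIV" using sets_eq_imp_space_eq[OF sM] by simp
  then have "(\<lambda>x. c * x) -` {..y} \<inter> space M = {..y / c}"
    using c by (auto simp: pos_le_divide_eq mult.commute)
  then show ?thesis unfolding cdf_def using m by (simp add: measure_distr)
qed

lemma real_law_convolution:
  assumes R: "real_law R" and N: "real_law N"
  shows "real_law (convolution R N)"
proof -
  have [measurable_cong]: "sets R = sets borel" "sets N = sets borel"
    using R N by (simp_all add: real_law_def)
  interpret R: prob_space R using R by (simp add: real_law_def)
  interpret N: prob_space N using N by (simp add: real_law_def)
  interpret RN: prob_space "R \<Otimes>\<^sub>M N" by (intro prob_space_pair) unfold_locales
  have "(\<lambda>(x, y). x + y) \<in> measurable (R \<Otimes>\<^sub>M N) (borel :: real measure)"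
    by measurable
  then have "prob_space (convolution R N)"
    unfolding convolution_def by (rule RN.prob_space_distr)
  then show ?thesis by (simp add: real_law_def)
qed

lemma cdf_convolution:
  assumes R: "real_law R" and N: "real_law N"
  shows "cdf (convolution R N) x = (\<integral> r. cdf N (x - r) \<partial>R)"
proof (rule cdf_eq_of_emeasure_atMost)
  have sR[measurable_cong]: "sets R = sets borel" and sN[measurable_cong]: "sets N = sets borel"
    using R N by (simp_all add: real_law_def)
  interpret R: prob_space R using R by (simp add: real_law_def)
  interpret N: prob_space N using N by (simp add: real_law_def)
  have [measurable]: "cdf N \<in> borel_measurable borel"
    using N by (rule borel_measurable_cdf_real_law)
  have int: "integrable R (\<lambda>r. cdf N (x - r))"
    by (rule R.integrable_const_bound[where B=1]) (auto simp: real_law_cdf_bounds[OF N])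
  have "emeasure (convolution R N) {..x} = (\<integral>\<^sup>+ r. \<integral>\<^sup>+ y. indicator {..x} (r + y) \<partial>N \<partial>R)"
    by (rule convolution_emeasure') (auto simp: sR sN R.finite_measure_axioms N.finite_measure_axioms)
  also have "\<dots> = (\<integral>\<^sup>+ r. ennreal (cdf N (x - r)) \<partial>R)"
  proof (intro nn_integral_cong)
    fix r
    have "(\<integral>\<^sup>+ y. indicator {..x} (r + y) \<partial>N) = (\<integral>\<^sup>+ y. indicator {..x - r} y \<partial>N)"
      by (intro nn_integral_cong) (auto simp: indicator_def)
    then show "(\<integral>\<^sup>+ y. indicator {..x} (r + y) \<partial>N) = ennreal (cdf N (x - r))"
      using emeasure_atMost_real_law[OF N] by (simp add: sN)
  qed
  also have "\<dots> = ennreal (\<integral> r. cdf N (x - r) \<partial>R)"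
    using int by (intro nn_integral_eq_integral) (auto simp: real_law_cdf_bounds[OF N])
  finally show "emeasure (convolution R N) {..x} = ennreal (\<integral> r. cdf N (x - r) \<partial>R)" .
  show "0 \<le> (\<integral> r. cdf N (x - r) \<partial>R)"
    using real_law_cdf_bounds[OF N] by (auto intro!: integral_nonneg_AE)
qed (rule real_law_convolution[OF R N])

subsection \<open>Contraction of the Bellman operator\<close>

lemma (in prob_space) square_integral_le_integral_square:
  fixes f :: "'a \<Rightarrow> real"
  assumes "integrable M f" "integrable M (\<lambda>x. (f x)\<^sup>2)"
  shows "(\<integral> x. f x \<partial>M)\<^sup>2 \<le> (\<integral> x. (f x)\<^sup>2 \<partial>M)"
  using variance_positive[of f] variance_eq[OF assms] by simp

lemma power2_weighted_mean_le:
  fixes w d :: "'x \<Rightarrow> real"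
  assumes "finite A" "\<And>x. x \<in> A \<Longrightarrow> 0 \<le> w x" "(\<Sum>x\<in>A. w x) = 1"
  shows "(\<Sum>x\<in>A. w x * d x)\<^sup>2 \<le> (\<Sum>x\<in>A. w x * (d x)\<^sup>2)"
proof -
  define m where "m = (\<Sum>x\<in>A. w x * d x)"
  have "0 \<le> (\<Sum>x\<in>A. w x * (d x - m)\<^sup>2)" using assms(2) by (intro sum_nonneg) auto
  also have "\<dots> = (\<Sum>x\<in>A. w x * (d x)\<^sup>2 - 2 * m * (w x * d x) + m\<^sup>2 * w x)"
    by (intro sum.cong) (auto simp: power2_eq_square algebra_simps)
  also have "\<dots> = (\<Sum>x\<in>A. w x * (d x)\<^sup>2) - 2 * m * m + m\<^sup>2 * (\<Sum>x\<in>A. w x)"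
    by (simp add: sum.distrib sum_subtractf sum_distrib_left m_def)
  finally show ?thesis using assms(3) by (simp add: m_def power2_eq_square)
qed

lemma cramer_sq_bind_pmf_le:
  fixes p :: "'x::finite pmf"
  assumes K1: "\<And>x. real_law (K1 x)" and K2: "\<And>x. real_law (K2 x)"
    and C: "\<And>x. cramer_sq (K1 x) (K2 x) \<le> C"
  shows "cramer_sq (measure_pmf p \<bind> K1) (measure_pmf p \<bind> K2) \<le> C"
proof -
  define \<delta> where "\<delta> x z = cdf (K1 x) z - cdf (K2 x) z" for x z
  have [measurable]: "cdf (K1 x) \<in> borel_measurable borel" "cdf (K2 x) \<in> borel_measurable borel" for x
    using K1 K2 by (auto intro: borel_measurable_cdf_real_law)
  have p1: "(\<Sum>x\<in>UNIV. pmf p x) = 1" by (rule sum_pmf_eq_1) auto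
  have pointwise: "ennreal ((cdf (measure_pmf p \<bind> K1) z - cdf (measure_pmf p \<bind> K2) z)\<^sup>2)
      \<le> (\<Sum>x\<in>UNIV. ennreal (pmf p x) * ennreal ((\<delta> x z)\<^sup>2))" for z
  proof -
    have "cdf (measure_pmf p \<bind> K1) z - cdf (measure_pmf p \<bind> K2) z = (\<Sum>x\<in>UNIV. pmf p x * \<delta> x z)"
      by (simp add: cdf_bind_pmf K1 K2 \<delta>_def sum_subtractf[symmetric] right_diff_distrib)
    then have "(cdf (measure_pmf p \<bind> K1) z - cdf (measure_pmf p \<bind> K2) z)\<^sup>2
        \<le> (\<Sum>x\<in>UNIV. pmf p x * (\<delta> x z)\<^sup>2)"
      using p1 by (simp add: power2_weighted_mean_le)
    moreover have "(\<Sum>x\<in>UNIV. ennreal (pmf p x) * ennreal ((\<delta> x z)\<^sup>2))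
        = ennreal (\<Sum>x\<in>UNIV. pmf p x * (\<delta> x z)\<^sup>2)"
      by (simp add: ennreal_mult[symmetric] sum_nonneg)
    ultimately show ?thesis by (simp add: ennreal_leI)
  qed
  have "cramer_sq (measure_pmf p \<bind> K1) (measure_pmf p \<bind> K2)
      \<le> (\<integral>\<^sup>+ z. (\<Sum>x\<in>UNIV. ennreal (pmf p x) * ennreal ((\<delta> x z)\<^sup>2)) \<partial>lborel)"
    unfolding cramer_sq_def by (intro nn_integral_mono pointwise)
  also have "\<dots> = (\<Sum>x\<in>UNIV. ennreal (pmf p x) * cramer_sq (K1 x) (K2 x))"
    unfolding cramer_sq_def \<delta>_def by (simp add: nn_integral_sum nn_integral_cmult)
  also have "\<dots> \<le> (\<Sum>x\<in>UNIV. ennreal (pmf p x) * C)"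
    by (intro sum_mono mult_left_mono C) auto
  also have "\<dots> = ennreal (\<Sum>x\<in>UNIV. pmf p x) * C"
    by (simp add: sum_distrib_right[symmetric])
  finally show ?thesis by (simp add: p1)
qed

lemma real_law_trans_op: "value_dist Z \<Longrightarrow> real_law (trans_op P \<pi> Z s a)"
  unfolding trans_op_def value_dist_def by (intro real_law_bind_pmf) auto

lemma cramer_sq_trans_op_le:
  fixes P :: "'s::finite \<Rightarrow> 'a::finite \<Rightarrow> 's pmf"
  assumes "value_dist Z1" "value_dist Z2" "\<And>s' a'. cramer_sq (Z1 s' a') (Z2 s' a') \<le> C"
  shows "cramer_sq (trans_op P \<pi> Z1 s a) (trans_op P \<pi> Z2 s a) \<le> C"
  unfolding trans_op_def using assms
  by (intro cramer_sq_bind_pmf_le real_law_bind_pmf) (auto simp: value_dist_def)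

lemma cramer_sq_distr_scale:
  assumes M: "real_law M" and N: "real_law N" and c: "0 < c"
  shows "cramer_sq (distr M borel (\<lambda>x. c * x)) (distr N borel (\<lambda>x. c * x)) = ennreal c * cramer_sq M N"
proof -
  have [measurable]: "cdf M \<in> borel_measurable borel" "cdf N \<in> borel_measurable borel"
    using M N by (auto intro: borel_measurable_cdf_real_law)
  have "(\<integral>\<^sup>+ y. ennreal ((cdf M (y / c) - cdf N (y / c))\<^sup>2) \<partial>lborel)
      = ennreal c * (\<integral>\<^sup>+ x. ennreal ((cdf M x - cdf N x)\<^sup>2) \<partial>lborel)"
    using nn_integral_real_affine[of "\<lambda>y. ennreal ((cdf M (y / c) - cdf N (y / c))\<^sup>2)" c 0] c
    by simp
  then show ?thesis unfolding cramer_sq_def using M N c by (simp add: cdf_distr_scale)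
qed

text \<open>The cdf difference of \<open>R * N\<^sub>i\<close> at \<open>x\<close> is the \<open>R\<close>-average of the translates
  \<open>d (x - r)\<close> of the cdf difference \<open>d\<close> of \<open>N\<^sub>i\<close>; apply Jensen inside, then Fubini and
  translation invariance of \<open>lborel\<close>.\<close>
lemma cramer_sq_convolution_le:
  assumes R: "real_law R" and N1: "real_law N1" and N2: "real_law N2"
  shows "cramer_sq (convolution R N1) (convolution R N2) \<le> cramer_sq N1 N2"
proof -
  define d where "d y = cdf N1 y - cdf N2 y" for y
  have d_bounded: "\<bar>d y\<bar> \<le> 1" for y
    unfolding d_def using N1 N2 by (rule real_law_cdf_diff_bounded)
  have [measurable]: "cdf N1 \<in> borel_measurable borel" "cdf N2 \<in> borel_measurable borel"
    using N1 N2 by (auto intro: borel_measurable_cdf_real_law)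
  have [measurable]: "d \<in> borel_measurable borel" unfolding d_def by measurable
  have [measurable_cong]: "sets R = sets borel" using R by (simp add: real_law_def)
  interpret R: prob_space R using R by (simp add: real_law_def)
  have "\<bar>cdf N x\<bar> \<le> 1" if "real_law N" for N x
    using real_law_cdf_bounds[OF that] by auto
  then have int_cdf: "integrable R (\<lambda>r. cdf N1 (x - r))" "integrable R (\<lambda>r. cdf N2 (x - r))" for x
    using N1 N2 by (auto intro!: R.integrable_const_bound[where B=1])
  have "\<bar>(d y)\<^sup>2\<bar> \<le> 1" for y
    using d_bounded[of y] by (simp add: abs_square_le_1)
  then have int_d: "integrable R (\<lambda>r. d (x - r))" "integrable R (\<lambda>r. (d (x - r))\<^sup>2)" for x
    using d_bounded by (auto intro!: R.integrable_const_bound[where B=1])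
  have "cramer_sq (convolution R N1) (convolution R N2)
      = (\<integral>\<^sup>+ x. ennreal ((\<integral> r. d (x - r) \<partial>R)\<^sup>2) \<partial>lborel)"
    unfolding cramer_sq_def d_def using int_cdf
    by (simp add: cdf_convolution[OF R N1] cdf_convolution[OF R N2]
        Bochner_Integration.integral_diff)
  also have "\<dots> \<le> (\<integral>\<^sup>+ x. \<integral>\<^sup>+ r. ennreal ((d (x - r))\<^sup>2) \<partial>R \<partial>lborel)"
  proof (rule nn_integral_mono)
    fix x
    have "(\<integral> r. d (x - r) \<partial>R)\<^sup>2 \<le> (\<integral> r. (d (x - r))\<^sup>2 \<partial>R)"
      using int_d by (rule R.square_integral_le_integral_square)
    moreover have "(\<integral>\<^sup>+ r. ennreal ((d (x - r))\<^sup>2) \<partial>R) = ennreal (\<integral> r. (d (x - r))\<^sup>2 \<partial>R)"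
      using int_d by (intro nn_integral_eq_integral) auto
    ultimately show "ennreal ((\<integral> r. d (x - r) \<partial>R)\<^sup>2) \<le> (\<integral>\<^sup>+ r. ennreal ((d (x - r))\<^sup>2) \<partial>R)"
      by (simp add: ennreal_leI)
  qed
  also have "\<dots> = (\<integral>\<^sup>+ r. \<integral>\<^sup>+ x. ennreal ((d (x - r))\<^sup>2) \<partial>lborel \<partial>R)"
  proof -
    interpret pair_sigma_finite R lborel ..
    show ?thesis
      by (rule Fubini'[where f="\<lambda>r x. ennreal ((d (x - r))\<^sup>2)"]) measurable
  qed
  also have "\<dots> = (\<integral>\<^sup>+ r. cramer_sq N1 N2 \<partial>R)"
  proof (rule nn_integral_cong)
    fix r
    show "(\<integral>\<^sup>+ x. ennreal ((d (x - r))\<^sup>2) \<partial>lborel) = cramer_sq N1 N2"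
      using nn_integral_real_affine[of "\<lambda>x. ennreal ((d (x - r))\<^sup>2)" 1 r]
      by (simp add: cramer_sq_def d_def)
  qed
  also have "\<dots> = cramer_sq N1 N2"
    by (simp add: R.emeasure_space_1)
  finally show ?thesis .
qed

lemma cramer_sq_bellman_le:
  fixes P :: "'s::finite \<Rightarrow> 'a::finite \<Rightarrow> 's pmf"
  assumes R: "value_dist R" and \<gamma>: "0 < \<gamma>"
    and Z1: "value_dist Z1" and Z2: "value_dist Z2"
    and C: "\<And>s' a'. cramer_sq (Z1 s' a') (Z2 s' a') \<le> C"
  shows "cramer_sq (bellman P \<pi> R \<gamma> Z1 s a) (bellman P \<pi> R \<gamma> Z2 s a) \<le> ennreal \<gamma> * C"
proof -
  have T1: "real_law (trans_op P \<pi> Z1 s a)" and T2: "real_law (trans_op P \<pi> Z2 s a)"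
    using Z1 Z2 by (simp_all add: real_law_trans_op)
  have "cramer_sq (bellman P \<pi> R \<gamma> Z1 s a) (bellman P \<pi> R \<gamma> Z2 s a)
      \<le> cramer_sq (distr (trans_op P \<pi> Z1 s a) borel (\<lambda>x. \<gamma> * x))
          (distr (trans_op P \<pi> Z2 s a) borel (\<lambda>x. \<gamma> * x))"
    unfolding bellman_def using R T1 T2
    by (intro cramer_sq_convolution_le real_law_distr) (auto simp: value_dist_def)
  also have "\<dots> = ennreal \<gamma> * cramer_sq (trans_op P \<pi> Z1 s a) (trans_op P \<pi> Z2 s a)"
    using T1 T2 \<gamma> by (rule cramer_sq_distr_scale)
  also have "\<dots> \<le> ennreal \<gamma> * C"
    using Z1 Z2 C by (intro mult_left_mono cramer_sq_trans_op_le) auto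
  finally show ?thesis .
qed

subsection \<open>The supremum metric on value distributions\<close>

lemma ell2_le_ell2_bar: "ell2 (Z1 s a) (Z2 s a) \<le> ell2_bar Z1 Z2"
  unfolding ell2_bar_def by (rule SUP_upper2[of "(s, a)"]) auto

lemma ell2_bar_self: "ell2_bar Z Z = 0"
  unfolding ell2_bar_def by (simp add: ell2_self)

lemma ell2_bar_commute: "ell2_bar Z1 Z2 = ell2_bar Z2 Z1"
  unfolding ell2_bar_def by (simp add: ell2_commute)

lemma ell2_bar_eq_0_imp_eq:
  assumes "value_dist Z1" "value_dist Z2" "ell2_bar Z1 Z2 = 0"
  shows "Z1 = Z2"
proof (intro ext)
  fix s a
  have "ell2 (Z1 s a) (Z2 s a) = 0"
    using ell2_le_ell2_bar[of Z1 s a Z2] assms(3) by simp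
  then have "cramer_sq (Z1 s a) (Z2 s a) = 0"
    using ell2_power2[of "Z1 s a" "Z2 s a"] by simp
  then show "Z1 s a = Z2 s a"
    using assms(1,2) by (intro cramer_sq_eq_0_imp_eq) (auto simp: value_dist_def)
qed

lemma ell2_bar_triangle:
  assumes "value_dist Z1" "value_dist Z2" "value_dist Z3"
  shows "ell2_bar Z1 Z3 \<le> ell2_bar Z1 Z2 + ell2_bar Z2 Z3"
  unfolding ell2_bar_def[of Z1 Z3]
proof (rule SUP_least, clarify)
  fix s a
  have "ell2 (Z1 s a) (Z3 s a) \<le> ell2 (Z1 s a) (Z2 s a) + ell2 (Z2 s a) (Z3 s a)"
    using assms by (intro ell2_triangle) (auto simp: value_dist_def)
  also have "\<dots> \<le> ell2_bar Z1 Z2 + ell2_bar Z2 Z3"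
    by (intro add_mono ell2_le_ell2_bar)
  finally show "ell2 (Z1 (fst (s, a)) (snd (s, a))) (Z3 (fst (s, a)) (snd (s, a)))
      \<le> ell2_bar Z1 Z2 + ell2_bar Z2 Z3" by simp
qed

lemma ell2_bar_bellman_le:
  fixes P :: "'s::finite \<Rightarrow> 'a::finite \<Rightarrow> 's pmf"
  assumes "value_dist R" "0 < \<gamma>" "value_dist Z1" "value_dist Z2"
  shows "ell2_bar (bellman P \<pi> R \<gamma> Z1) (bellman P \<pi> R \<gamma> Z2) \<le> ennreal (sqrt \<gamma>) * ell2_bar Z1 Z2"
  unfolding ell2_bar_def[of "bellman P \<pi> R \<gamma> Z1"]
proof (rule SUP_least, clarify)
  fix s a
  have "cramer_sq (Z1 s' a') (Z2 s' a') \<le> (ell2_bar Z1 Z2)\<^sup>2" for s' a'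
    unfolding ell2_le_iff[symmetric] by (rule ell2_le_ell2_bar)
  then have "cramer_sq (bellman P \<pi> R \<gamma> Z1 s a) (bellman P \<pi> R \<gamma> Z2 s a)
      \<le> ennreal \<gamma> * (ell2_bar Z1 Z2)\<^sup>2"
    using assms by (intro cramer_sq_bellman_le)
  also have "\<dots> = (ennreal (sqrt \<gamma>) * ell2_bar Z1 Z2)\<^sup>2"
    using assms(2) by (simp add: power_mult_distrib ennreal_power)
  finally show "ell2 (bellman P \<pi> R \<gamma> Z1 (fst (s, a)) (snd (s, a)))
      (bellman P \<pi> R \<gamma> Z2 (fst (s, a)) (snd (s, a))) \<le> ennreal (sqrt \<gamma>) * ell2_bar Z1 Z2"
    by (simp add: ell2_le_iff)
qed

theorem proposition1:
  fixes P :: "'s::finite \<Rightarrow> 'a::finite \<Rightarrow> 's pmf"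
    and \<pi> :: "'s \<Rightarrow> 'a pmf"
    and R :: "'s \<Rightarrow> 'a \<Rightarrow> real measure"
    and \<gamma> :: real
  assumes R: "value_dist R"
    and \<gamma>: "0 < \<gamma>" "\<gamma> < 1"
  shows "(\<forall>Z :: 's \<Rightarrow> 'a \<Rightarrow> real measure. value_dist Z \<longrightarrow> ell2_bar Z Z = 0)
    \<and> (\<forall>(Z1 :: 's \<Rightarrow> 'a \<Rightarrow> real measure) Z2. value_dist Z1 \<longrightarrow> value_dist Z2 \<longrightarrow> ell2_bar Z1 Z2 = 0 \<longrightarrow> Z1 = Z2)
    \<and> (\<forall>(Z1 :: 's \<Rightarrow> 'a \<Rightarrow> real measure) Z2. value_dist Z1 \<longrightarrow> value_dist Z2 \<longrightarrow> ell2_bar Z1 Z2 = ell2_bar Z2 Z1)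
    \<and> (\<forall>(Z1 :: 's \<Rightarrow> 'a \<Rightarrow> real measure) Z2 Z3. value_dist Z1 \<longrightarrow> value_dist Z2 \<longrightarrow> value_dist Z3 \<longrightarrow>
          ell2_bar Z1 Z3 \<le> ell2_bar Z1 Z2 + ell2_bar Z2 Z3)
    \<and> (\<forall>(Z1 :: 's \<Rightarrow> 'a \<Rightarrow> real measure) Z2. value_dist Z1 \<longrightarrow> value_dist Z2 \<longrightarrow>
          ell2_bar (bellman P \<pi> R \<gamma> Z1) (bellman P \<pi> R \<gamma> Z2)
            \<le> ennreal (sqrt \<gamma>) * ell2_bar Z1 Z2)"
proof (intro conjI allI impI)
  fix Z1 Z2 Z3 :: "'s \<Rightarrow> 'a \<Rightarrow> real measure"
  show "ell2_bar Z1 Z1 = 0" by (rule ell2_bar_self)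
  show "ell2_bar Z1 Z2 = ell2_bar Z2 Z1" by (rule ell2_bar_commute)
  assume Z1: "value_dist Z1" and Z2: "value_dist Z2"
  then show "ell2_bar Z1 Z2 = 0 \<Longrightarrow> Z1 = Z2" by (rule ell2_bar_eq_0_imp_eq)
  show "ell2_bar (bellman P \<pi> R \<gamma> Z1) (bellman P \<pi> R \<gamma> Z2) \<le> ennreal (sqrt \<gamma>) * ell2_bar Z1 Z2"
    using R \<gamma>(1) Z1 Z2 by (rule ell2_bar_bellman_le)
  show "value_dist Z3 \<Longrightarrow> ell2_bar Z1 Z3 \<le> ell2_bar Z1 Z2 + ell2_bar Z2 Z3"
    using Z1 Z2 by (rule ell2_bar_triangle)
qed

end
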